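(* There is a meager set $M\subseteq(\omega^\omega)^2$ such that for every superperfect tree $T\subseteq\omega^{<\omega}$ there are $f\neq g$ in $[T]$ with $\langle f,g\rangle\in M$.
   Context: A tree $T\subseteq\omega^{<\omega}$ is superperfect if for every $\sigma\in T$ there is $\tau\supseteq\sigma$ in $T$ such that $\tau^\frown\langle n\rangle\in T$ for infinitely many $n$; $[T]$ is the set of infinite branches of $T$. *)

theory Defs
  imports "HOL-Analysis.Analysis" "HOL-Library.Sublist"
begin

text \<open>Baire space omega^omega is the type nat \<Rightarrow> nat with the product topology
  (library instance), nat carrying its (discrete) order topology; the square
  (omega^omega)^2 carries the product topology of the pair type.\<close>

definition nowhere_dense :: "'a::topological_space set \<Rightarrow> bool" where
  "nowhere_dense A \<longleftrightarrow> interior (closure A) = {}"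

definition meager :: "'a::topological_space set \<Rightarrow> bool" where
  "meager M \<longleftrightarrow> (\<exists>F. countable F \<and> (\<forall>A\<in>F. nowhere_dense A) \<and> M \<subseteq> \<Union>F)"

definition is_tree :: "nat list set \<Rightarrow> bool" where
  "is_tree T \<longleftrightarrow> T \<noteq> {} \<and> (\<forall>\<sigma> \<tau>. \<tau> \<in> T \<longrightarrow> prefix \<sigma> \<tau> \<longrightarrow> \<sigma> \<in> T)"

definition superperfect :: "nat list set \<Rightarrow> bool" where
  "superperfect T \<longleftrightarrow> is_tree T \<and>
     (\<forall>\<sigma>\<in>T. \<exists>\<tau>\<in>T. prefix \<sigma> \<tau> \<and> infinite {n. \<tau> @ [n] \<in> T})"

definition branches :: "nat list set \<Rightarrow> (nat \<Rightarrow> nat) set" where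
  "branches T = {f. \<forall>n. map f [0..<n] \<in> T}"

end

theory Submission
  imports Defs
begin

text \<open>Code a function f :: nat \<Rightarrow> nat by the strictly increasing sequence of partial sums
  of the numbers f i + 1. Pairs whose codes share only finitely many values form a meager set,
  because having a common value \<ge> N is a dense open condition. In a superperfect tree two
  branches with almost disjoint codes are built alternately through splitting nodes: each branch
  is extended by a successor so large that all its new partial sums exceed every partial sum the
  other branch has reached so far, so the only common values are those of the starting node.\<close>

definition weight :: "nat list \<Rightarrow> nat" where
  "weight s = sum_list (map Suc s)"

definition prefix_weights :: "nat list \<Rightarrow> nat set" where
  "prefix_weights s = {weight r | r. prefix r s}"

definition partial_sums :: "(nat \<Rightarrow> nat) \<Rightarrow> nat set" where
  "partial_sums f = range (\<lambda>k. weight (map f [0..<k]))"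

lemma weight_append [simp]: "weight (xs @ ys) = weight xs + weight ys"
  by (simp add: weight_def)

lemma length_le_weight: "length s \<le> weight s"
  by (induction s) (auto simp: weight_def)

lemma weight_prefix_mono: "prefix r s \<Longrightarrow> weight r \<le> weight s"
  by (auto simp: prefix_def)

lemma prefix_weights_le_weight: "x \<in> prefix_weights s \<Longrightarrow> x \<le> weight s"
  by (auto simp: prefix_weights_def weight_prefix_mono)

lemma finite_prefix_weights: "finite (prefix_weights s)"
proof -
  have "prefix_weights s = weight ` set (prefixes s)"
    by (auto simp: prefix_weights_def)
  then show ?thesis
    by simp
qed

lemma infinite_partial_sums: "infinite (partial_sums f)"
  unfolding infinite_nat_iff_unbounded_le partial_sums_def
  using length_le_weight by (metis diff_zero length_map length_upt rangeI)

lemma prefix_map_upt: "n \<le> m \<Longrightarrow> prefix (map f [0..<n]) (map f [0..<m])"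
  by (metis le_add_diff_inverse map_append prefixI upt_add_eq_append zero_le)

definition cylinder :: "nat \<Rightarrow> (nat \<Rightarrow> 'a) \<Rightarrow> (nat \<Rightarrow> 'a) set" where
  "cylinder N f = {h. \<forall>i<N. h i = f i}"

lemma open_cylinder: "open (cylinder N (f :: nat \<Rightarrow> 'a::discrete_topology))"
proof -
  have "open {h. \<forall>i\<in>{..<N}. h (id i) \<in> {f i}}"
    by (rule product_topology_basis') (auto simp: open_discrete)
  moreover have "cylinder N f = {h. \<forall>i\<in>{..<N}. h (id i) \<in> {f i}}"
    by (auto simp: cylinder_def)
  ultimately show ?thesis
    by simp
qed

lemma map_upt_cylinder: "h \<in> cylinder N f \<Longrightarrow> map h [0..<N] = map f [0..<N]"
  by (simp add: cylinder_def)

lemma cylinder_subset_open: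
  fixes U :: "(nat \<Rightarrow> 'a::topological_space) set"
  assumes "open U" "f \<in> U"
  obtains N where "cylinder N f \<subseteq> U"
proof -
  obtain X where X: "f \<in> (\<Pi>\<^sub>E i\<in>UNIV. X i)" "finite {i. X i \<noteq> UNIV}"
    "(\<Pi>\<^sub>E i\<in>UNIV. X i) \<subseteq> U"
    using product_topology_open_contains_basis assms unfolding open_fun_def by force
  then obtain N where N: "{i. X i \<noteq> UNIV} \<subseteq> {..<N}"
    using finite_nat_bounded by blast
  have "h \<in> (\<Pi>\<^sub>E i\<in>UNIV. X i)" if "h \<in> cylinder N f" for h
  proof -
    have "h i \<in> X i" for i
    proof (cases "X i = UNIV")
      case False
      then have "i < N"
        using N by blast
      then show ?thesis
        using that X(1) by (simp add: cylinder_def PiE_iff)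
    qed simp
    then show ?thesis
      by (simp add: PiE_iff)
  qed
  then have "cylinder N f \<subseteq> U"
    using X(3) by blast
  then show ?thesis
    by (fact that)
qed

lemma cylinder_Times_subset_open:
  fixes U :: "((nat \<Rightarrow> 'a::topological_space) \<times> (nat \<Rightarrow> 'b::topological_space)) set"
  assumes "open U" "(f, g) \<in> U"
  obtains N where "cylinder N f \<times> cylinder N g \<subseteq> U"
proof -
  obtain A B where AB: "open A" "open B" "(f, g) \<in> A \<times> B" "A \<times> B \<subseteq> U"
    by (rule open_prod_elim[OF assms])
  obtain N1 N2 where "cylinder N1 f \<subseteq> A" "cylinder N2 g \<subseteq> B"
    using cylinder_subset_open AB(1-3) by (metis mem_Times_iff fst_conv snd_conv)
  then have "cylinder (max N1 N2) f \<times> cylinder (max N1 N2) g \<subseteq> U"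
    using AB(4) by (fastforce simp: cylinder_def)
  with that show ?thesis .
qed

lemma nowhere_denseI:
  assumes "\<And>U. open U \<Longrightarrow> U \<noteq> {} \<Longrightarrow> \<exists>V. open V \<and> V \<noteq> {} \<and> V \<subseteq> U \<and> V \<inter> A = {}"
  shows "nowhere_dense A"
  unfolding nowhere_dense_def
proof (rule ccontr)
  assume "interior (closure A) \<noteq> {}"
  then obtain V where V: "open V" "V \<noteq> {}" "V \<subseteq> interior (closure A)" "V \<inter> A = {}"
    using assms[OF open_interior] by blast
  then have "V \<inter> closure A = {}"
    by (simp add: open_Int_closure_eq_empty)
  moreover have "V \<subseteq> closure A"
    using V(3) interior_subset by blast
  ultimately show False
    using V(2) by blast
qed

definition bounded_common_sums :: "nat \<Rightarrow> ((nat \<Rightarrow> nat) \<times> (nat \<Rightarrow> nat)) set" where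
  "bounded_common_sums N = {(f, g). partial_sums f \<inter> partial_sums g \<subseteq> {..<N}}"

definition almost_disjoint_sums :: "((nat \<Rightarrow> nat) \<times> (nat \<Rightarrow> nat)) set" where
  "almost_disjoint_sums = {(f, g). finite (partial_sums f \<inter> partial_sums g)}"

lemma nowhere_dense_bounded_common_sums: "nowhere_dense (bounded_common_sums N)"
proof (rule nowhere_denseI)
  fix U :: "((nat \<Rightarrow> nat) \<times> (nat \<Rightarrow> nat)) set"
  assume "open U" "U \<noteq> {}"
  then obtain f g M where U: "cylinder M f \<times> cylinder M g \<subseteq> U"
    using cylinder_Times_subset_open by (metis ex_in_conv surj_pair)
  define X where "X = weight (map f [0..<M]) + weight (map g [0..<M]) + N + 1"
  define f' where "f' = f(M := X - weight (map f [0..<M]) - 1)"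
  define g' where "g' = g(M := X - weight (map g [0..<M]) - 1)"
  define V where "V = cylinder (Suc M) f' \<times> cylinder (Suc M) g'"
  have "V \<subseteq> U"
    using U by (force simp: V_def cylinder_def f'_def g'_def)
  moreover have "V \<inter> bounded_common_sums N = {}"
  proof -
    have "X \<in> partial_sums h \<inter> partial_sums k" if "(h, k) \<in> V" for h k
    proof -
      have "h \<in> cylinder (Suc M) f'" "k \<in> cylinder (Suc M) g'"
        using that by (simp_all add: V_def)
      then have "map h [0..<Suc M] = map f' [0..<Suc M]" "map k [0..<Suc M] = map g' [0..<Suc M]"
        by (blast intro: map_upt_cylinder)+
      moreover have "map f' [0..<M] = map f [0..<M]" "map g' [0..<M] = map g [0..<M]"
        by (simp_all add: f'_def g'_def)
      then have "weight (map f' [0..<Suc M]) = X" "weight (map g' [0..<Suc M]) = X"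
        by (simp_all add: weight_def f'_def g'_def X_def)
      ultimately have "weight (map h [0..<Suc M]) = X" "weight (map k [0..<Suc M]) = X"
        by metis+
      then show ?thesis
        unfolding partial_sums_def by (metis IntI rangeI)
    qed
    then show ?thesis
      by (force simp: bounded_common_sums_def X_def)
  qed
  moreover have "open V" "(f', g') \<in> V"
    by (simp_all add: V_def open_cylinder open_Times) (simp add: cylinder_def)
  ultimately show "\<exists>V. open V \<and> V \<noteq> {} \<and> V \<subseteq> U \<and> V \<inter> bounded_common_sums N = {}"
    by blast
qed

lemma meager_almost_disjoint_sums: "meager almost_disjoint_sums"
  unfolding meager_def
proof (intro exI conjI)
  show "almost_disjoint_sums \<subseteq> \<Union> (range bounded_common_sums)"
    by (auto simp: almost_disjoint_sums_def bounded_common_sums_def dest: finite_nat_bounded)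
qed (auto simp: nowhere_dense_bounded_common_sums)

lemma prefix_nth_eq: "prefix xs ys \<Longrightarrow> i < length xs \<Longrightarrow> xs ! i = ys ! i"
  by (auto simp: prefix_def nth_append)

lemma strict_prefix_chain_mono:
  assumes "\<And>n. strict_prefix (u n) (u (Suc n))" "m \<le> n"
  shows "prefix (u m) (u n)"
  using assms prefix_order.less_imp_le by (blast intro: prefix_order.lift_Suc_mono_le)

lemma strict_prefix_chain_length:
  assumes "\<And>n. strict_prefix (u n) (u (Suc n))"
  shows "n \<le> length (u n)"
proof (induction n)
  case (Suc n)
  then show ?case
    using prefix_length_less[OF assms[of n]] by (metis Suc_le_eq order.strict_trans1)
qed simp

lemma strict_prefix_chain_limit:
  assumes chain: "\<And>n. strict_prefix (u n) (u (Suc n))"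
  obtains f :: "nat \<Rightarrow> 'a" where "\<And>n. map f [0..<length (u n)] = u n"
proof -
  define f where "f i = u (Suc i) ! i" for i
  have f_nth: "f i = u n ! i" if "i < length (u n)" for i n
  proof -
    have "i < length (u (Suc i))"
      using strict_prefix_chain_length[of u, OF chain, of "Suc i"] by simp
    moreover consider "Suc i \<le> n" | "n \<le> Suc i"
      by linarith
    ultimately show ?thesis
      unfolding f_def using that strict_prefix_chain_mono[of u, OF chain] prefix_nth_eq by metis
  qed
  then have "map f [0..<length (u n)] = u n" for n
    by (auto intro: nth_equalityI)
  then show ?thesis
    by (rule that)
qed

lemma strict_prefix_chain_limit_branch:
  assumes "is_tree T" "\<And>n. u n \<in> T" "\<And>n. strict_prefix (u n) (u (Suc n))"
    and "\<And>n. map f [0..<length (u n)] = u n"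
  shows "f \<in> branches T"
proof -
  have "prefix (map f [0..<n]) (u n)" for n
    using prefix_map_upt strict_prefix_chain_length assms(3,4) by metis
  then have "map f [0..<n] \<in> T" for n
    using assms(1,2) unfolding is_tree_def by blast
  then show ?thesis
    unfolding branches_def by blast
qed

definition splitting :: "nat list set \<Rightarrow> nat list \<Rightarrow> bool" where
  "splitting T s \<longleftrightarrow> s \<in> T \<and> infinite {n. s @ [n] \<in> T}"

lemma superperfect_splitting_above:
  assumes "superperfect T" "s \<in> T"
  obtains s' where "prefix s s'" "splitting T s'"
  using assms unfolding superperfect_def splitting_def by blast

lemma splitting_extension:
  assumes "superperfect T" "splitting T s"
  shows "\<exists>s'. splitting T s' \<and> strict_prefix s s' \<and>
    prefix_weights s' \<subseteq> prefix_weights s \<union> {m<..}"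
proof -
  obtain a where a: "m < a" "s @ [a] \<in> T"
    using assms(2) unfolding splitting_def infinite_nat_iff_unbounded by blast
  then obtain s' where s': "prefix (s @ [a]) s'" "splitting T s'"
    using assms(1) superperfect_splitting_above by blast
  have "weight r \<in> prefix_weights s \<union> {m<..}" if "prefix r s'" for r
  proof (cases "prefix r s")
    case True
    then show ?thesis by (auto simp: prefix_weights_def)
  next
    case False
    then have "prefix (s @ [a]) r"
      using prefix_same_cases[OF that s'(1)] by auto
    then have "m < weight r"
      using a(1) weight_prefix_mono[of "s @ [a]" r] by (simp add: weight_def)
    then show ?thesis by simp
  qed
  then have "prefix_weights s' \<subseteq> prefix_weights s \<union> {m<..}"
    unfolding prefix_weights_def[of s'] by blast
  moreover have "strict_prefix s s'"
    using s'(1) by (rule prefix_snocD)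
  ultimately show ?thesis
    using s'(2) by blast
qed

lemma prefix_weights_alternating_step:
  assumes "prefix_weights u' \<subseteq> prefix_weights u \<union> {weight v<..}"
    and "prefix_weights v' \<subseteq> prefix_weights v \<union> {weight u'<..}"
  shows "prefix_weights u' \<inter> prefix_weights v' \<subseteq> prefix_weights u \<inter> prefix_weights v"
  using assms prefix_weights_le_weight[of _ u'] prefix_weights_le_weight[of _ v]
  by fastforce

primrec alternating_chains ::
  "(nat list \<Rightarrow> nat \<Rightarrow> nat list) \<Rightarrow> nat list \<Rightarrow> nat \<Rightarrow> nat list \<times> nat list" where
  "alternating_chains ext t 0 = (t, t)"
| "alternating_chains ext t (Suc n) =
    (case alternating_chains ext t n of
      (u, v) \<Rightarrow> let u' = ext u (weight v) in (u', ext v (weight u')))"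

lemma alternating_chains_properties:
  assumes ext: "\<And>s m. P s \<Longrightarrow> P (ext s m) \<and> strict_prefix s (ext s m) \<and>
      prefix_weights (ext s m) \<subseteq> prefix_weights s \<union> {m<..}"
    and "P t"
  defines "u n \<equiv> fst (alternating_chains ext t n)" and "v n \<equiv> snd (alternating_chains ext t n)"
  shows "P (u n) \<and> P (v n) \<and> prefix_weights (u n) \<inter> prefix_weights (v n) \<subseteq> prefix_weights t"
    and "strict_prefix (u n) (u (Suc n))" "strict_prefix (v n) (v (Suc n))"
proof -
  have uv_Suc: "u (Suc n) = ext (u n) (weight (v n))" "v (Suc n) = ext (v n) (weight (u (Suc n)))"
    for n by (simp_all add: u_def v_def Let_def split: prod.split)
  show inv: "P (u n) \<and> P (v n) \<and> prefix_weights (u n) \<inter> prefix_weights (v n) \<subseteq> prefix_weights t"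
    for n
  proof (induction n)
    case (Suc n)
    then show ?case
      using ext prefix_weights_alternating_step unfolding uv_Suc by (meson order.trans)
  qed (simp add: u_def v_def \<open>P t\<close>)
  show "strict_prefix (u n) (u (Suc n))" "strict_prefix (v n) (v (Suc n))"
    using ext inv unfolding uv_Suc by blast+
qed

lemma partial_sums_limits_Int_subset:
  assumes "\<And>n. strict_prefix (u n) (u (Suc n))" "\<And>n. map f [0..<length (u n)] = u n"
    and "\<And>n. strict_prefix (v n) (v (Suc n))" "\<And>n. map g [0..<length (v n)] = v n"
    and "\<And>n. prefix_weights (u n) \<inter> prefix_weights (v n) \<subseteq> S"
  shows "partial_sums f \<inter> partial_sums g \<subseteq> S"
proof
  fix x assume "x \<in> partial_sums f \<inter> partial_sums g"
  then obtain k j where x: "x = weight (map f [0..<k])" "x = weight (map g [0..<j])"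
    unfolding partial_sums_def by blast
  define n where "n = max k j"
  have "prefix (map f [0..<k]) (u n)" "prefix (map g [0..<j]) (v n)"
    using prefix_map_upt strict_prefix_chain_length assms(1-4) unfolding n_def
    by (metis max.cobounded1 max.cobounded2 order.trans)+
  then have "x \<in> prefix_weights (u n) \<inter> prefix_weights (v n)"
    using x unfolding prefix_weights_def by blast
  then show "x \<in> S"
    using assms(5) by blast
qed

lemma superperfect_almost_disjoint_branches:
  assumes sp: "superperfect T"
  shows "\<exists>f\<in>branches T. \<exists>g\<in>branches T. (f, g) \<in> almost_disjoint_sums"
proof -
  have tree: "is_tree T"
    using sp unfolding superperfect_def by simp
  then have "[] \<in> T"
    unfolding is_tree_def by (metis Nil_prefix ex_in_conv)
  then obtain t where t: "splitting T t"
    using sp superperfect_splitting_above by blast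
  obtain ext where ext: "\<And>s m. splitting T s \<Longrightarrow> splitting T (ext s m) \<and>
      strict_prefix s (ext s m) \<and> prefix_weights (ext s m) \<subseteq> prefix_weights s \<union> {m<..}"
    using splitting_extension[OF sp] by metis
  define u where "u n = fst (alternating_chains ext t n)" for n
  define v where "v n = snd (alternating_chains ext t n)" for n
  note uv = alternating_chains_properties[where P = "splitting T" and ext = ext, OF ext t,
    folded u_def v_def]
  obtain f g where f: "\<And>n. map f [0..<length (u n)] = u n"
    and g: "\<And>n. map g [0..<length (v n)] = v n"
    using strict_prefix_chain_limit uv(2,3) by metis
  have "f \<in> branches T" "g \<in> branches T"
    using strict_prefix_chain_limit_branch[OF tree] f g uv unfolding splitting_def by blast+
  moreover have "partial_sums f \<inter> partial_sums g \<subseteq> prefix_weights t"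
    using partial_sums_limits_Int_subset[of u f v g] uv f g by blast
  then have "(f, g) \<in> almost_disjoint_sums"
    unfolding almost_disjoint_sums_def using finite_prefix_weights finite_subset by blast
  ultimately show ?thesis
    by blast
qed

theorem proposition5p3:
  "\<exists>M :: ((nat \<Rightarrow> nat) \<times> (nat \<Rightarrow> nat)) set. meager M \<and>
     (\<forall>T. superperfect T \<longrightarrow> (\<exists>f\<in>branches T. \<exists>g\<in>branches T. f \<noteq> g \<and> (f, g) \<in> M))"
proof (intro exI conjI allI impI)
  show "meager almost_disjoint_sums"
    by (rule meager_almost_disjoint_sums)
  fix T assume "superperfect T"
  then obtain f g where "f \<in> branches T" "g \<in> branches T" "(f, g) \<in> almost_disjoint_sums"
    using superperfect_almost_disjoint_branches by blast
  moreover have "f \<noteq> g"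
    using \<open>(f, g) \<in> almost_disjoint_sums\<close> infinite_partial_sums
    by (auto simp: almost_disjoint_sums_def)
  ultimately show "\<exists>f\<in>branches T. \<exists>g\<in>branches T. f \<noteq> g \<and> (f, g) \<in> almost_disjoint_sums"
    by blast
qed

end
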